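(* Consider the $T$-round online first-price auction problem described in the context, and suppose the learner knows an upper bound $V_T$ on $\sum_{t=2}^T|m_t-m_{t-1}|$, with $V_T=o(T)$, and that $V_T^v\coloneqq\sum_{t=2}^T|v_t-v_{t-1}|=o(T)$. Then the policy that partitions $\{1,\dots,T\}$ into consecutive batches of length $\Delta_T$ (the last possibly shorter), with $\Delta_T$ of order $\left(\frac{T}{V_T+V_T^v}\right)^{2/3}$, and at the start of each batch restarts the Hedge (exponential weights) algorithm over a finite grid of constant bids in $[0,1]$ (with suitable grid and learning rate, using full-information rewards $r(\tau;v_t,m_t)$ of every grid bid $\tau$), achieves expected dynamic regret $\tilde{O}\left(T^{2/3}(V_T+V_T^v)^{1/3}\right)$.
   Context: Online first-price auction over $T$ rounds: at each round $t$ the learner observes a private value $v_t\in[0,1]$, submits a bid $b_t\in[0,1]$ (possibly randomized, depending only on past $(v_s,m_s)_{s<t}$ and $v_t$), then observes $m_t\in[0,1]$, the highest bid of the other bidders, and receives reward $r(b_t;v_t,m_t)$ with $r(b;v,m)\coloneqq(v-b)\mathbbm{1}(b\ge m)$. The expected dynamic regret is $\mathbb{E}[\mathrm{DR}_T(\pi)]\coloneqq\sum_{t=1}^T\max\{v_t-m_t,0\}-\sum_{t=1}^T\mathbb{E}[r(b_t;v_t,m_t)]$. $\tilde{O}(\cdot)$ hides polylogarithmic factors in $T$. *)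

theory Defs
  imports Complex_Main "HOL-Library.Landau_Symbols"
begin

definition reward :: "real \<Rightarrow> real \<Rightarrow> real \<Rightarrow> real" where
  "reward b v m = (if m \<le> b then v - b else 0)"

definition variation :: "(nat \<Rightarrow> real) \<Rightarrow> nat \<Rightarrow> real" where
  "variation f T = (\<Sum>t=2..T. \<bar>f t - f (t - 1)\<bar>)"

definition grid :: "nat \<Rightarrow> nat \<Rightarrow> real" where
  "grid K k = real k / real K"

definition batch_start :: "nat \<Rightarrow> nat \<Rightarrow> nat" where
  "batch_start D t = ((t - 1) div D) * D + 1"

definition cum_reward ::
  "nat \<Rightarrow> nat \<Rightarrow> (nat \<Rightarrow> real) \<Rightarrow> (nat \<Rightarrow> real) \<Rightarrow> nat \<Rightarrow> nat \<Rightarrow> real" where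
  "cum_reward K D v m t k = (\<Sum>s\<in>{batch_start D t..<t}. reward (grid K k) (v s) (m s))"

definition hedge_prob ::
  "nat \<Rightarrow> real \<Rightarrow> nat \<Rightarrow> (nat \<Rightarrow> real) \<Rightarrow> (nat \<Rightarrow> real) \<Rightarrow> nat \<Rightarrow> nat \<Rightarrow> real" where
  "hedge_prob K eta D v m t k =
     exp (eta * cum_reward K D v m t k) / (\<Sum>j=0..K. exp (eta * cum_reward K D v m t j))"

definition exp_reward ::
  "nat \<Rightarrow> real \<Rightarrow> nat \<Rightarrow> (nat \<Rightarrow> real) \<Rightarrow> (nat \<Rightarrow> real) \<Rightarrow> nat \<Rightarrow> real" where
  "exp_reward K eta D v m t =
     (\<Sum>k=0..K. hedge_prob K eta D v m t k * reward (grid K k) (v t) (m t))"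

definition dyn_regret ::
  "nat \<Rightarrow> real \<Rightarrow> nat \<Rightarrow> nat \<Rightarrow> (nat \<Rightarrow> real) \<Rightarrow> (nat \<Rightarrow> real) \<Rightarrow> real" where
  "dyn_regret K eta D T v m =
     (\<Sum>t=1..T. max (v t - m t) 0) - (\<Sum>t=1..T. exp_reward K eta D v m t)"

end

theory Submission
  imports Defs
begin

(* Within a batch, m and v each move by at most the
   batch's share W of the total variation, so a single grid bid loses at most 2 W + 1/K per round
   against the dynamic benchmark max (v - m) 0. Hedge over the K + 1 grid bids, restarted on every
   batch, is within ln (K + 1) / eta + eta D of the best grid bid of the batch. With K = T and
   eta = 1 / sqrt D, summing over the T / D batches bounds the regret by
   2 D (V_T + V_T^v) + 1 + (T / D + 1) sqrt D (ln (T + 1) + 1), and D of order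
   (T / (V_T + V_T^v))^(2/3) balances both terms at T^(2/3) (V_T + V_T^v)^(1/3) ln T. *)

section \<open>Exponential weights\<close>

lemma exp_le_one_plus_x_plus_sq:
  fixes x :: real
  assumes "\<bar>x\<bar> \<le> 1"
  shows "exp x \<le> 1 + x + x\<^sup>2"
proof (cases "0 \<le> x")
  case True
  then show ?thesis using exp_bound assms by simp
next
  case False
  define y where "y = - x"
  have y: "0 \<le> y" "y \<le> 1" using False assms by (auto simp: y_def)
  have pos: "0 < 1 + y + y\<^sup>2 / 2" using y by (simp add: add_pos_nonneg)
  have "1 \<le> (1 - y + y\<^sup>2) * (1 + y + y\<^sup>2 / 2)"
  proof -
    have "(1 - y + y\<^sup>2) * (1 + y + y\<^sup>2 / 2) = 1 + y\<^sup>2 / 2 + y ^ 3 / 2 + y ^ 4 / 2"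
      by (simp add: field_simps power2_eq_square power3_eq_cube power4_eq_xxxx)
    then show ?thesis using y by simp
  qed
  then have "1 / (1 + y + y\<^sup>2 / 2) \<le> 1 - y + y\<^sup>2"
    using pos by (simp add: divide_simps)
  moreover have "exp x \<le> 1 / (1 + y + y\<^sup>2 / 2)"
    using exp_lower_Taylor_quadratic[OF y(1)] pos
    by (simp add: y_def exp_minus divide_simps mult.commute)
  ultimately show ?thesis by (simp add: y_def)
qed

definition exp_weights :: "real \<Rightarrow> 'a set \<Rightarrow> ('a \<Rightarrow> real) \<Rightarrow> 'a \<Rightarrow> real" where
  "exp_weights \<eta> A G k = exp (\<eta> * G k) / (\<Sum>j\<in>A. exp (\<eta> * G j))"

lemma exp_weights_nonneg: "0 \<le> exp_weights \<eta> A G k"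
  by (simp add: exp_weights_def sum_nonneg)

lemma sum_exp_weights:
  assumes "finite A" "A \<noteq> {}"
  shows "(\<Sum>k\<in>A. exp_weights \<eta> A G k) = 1"
proof -
  have "0 < (\<Sum>j\<in>A. exp (\<eta> * G j))" using assms by (intro sum_pos) auto
  then show ?thesis by (simp add: exp_weights_def flip: sum_divide_distrib)
qed

lemma exp_potential_step:
  fixes G g :: "'a \<Rightarrow> real"
  assumes "finite A" "0 < \<eta>" "\<eta> \<le> 1" and g: "\<And>k. k \<in> A \<Longrightarrow> \<bar>g k\<bar> \<le> 1"
  shows "(\<Sum>k\<in>A. exp (\<eta> * (G k + g k)))
    \<le> (\<Sum>k\<in>A. exp (\<eta> * G k)) * exp (\<eta> * (\<Sum>k\<in>A. exp_weights \<eta> A G k * g k) + \<eta>\<^sup>2)"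
proof -
  define Z where "Z = (\<Sum>k\<in>A. exp (\<eta> * G k))"
  have weights: "exp_weights \<eta> A G k = exp (\<eta> * G k) / Z" for k
    by (simp add: exp_weights_def Z_def)
  have "(\<Sum>k\<in>A. exp (\<eta> * (G k + g k))) \<le> (\<Sum>k\<in>A. exp (\<eta> * G k) * (1 + \<eta> * g k + \<eta>\<^sup>2))"
  proof (intro sum_mono)
    fix k assume k: "k \<in> A"
    have "\<bar>\<eta> * g k\<bar> \<le> 1" using g[OF k] assms by (simp add: abs_mult mult_le_one)
    then have "exp (\<eta> * g k) \<le> 1 + \<eta> * g k + (\<eta> * g k)\<^sup>2" by (rule exp_le_one_plus_x_plus_sq)
    also have "(\<eta> * g k)\<^sup>2 \<le> \<eta>\<^sup>2"
      using g[OF k] by (simp add: power_mult_distrib abs_square_le_1 mult_left_le)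
    finally have "exp (\<eta> * G k) * exp (\<eta> * g k) \<le> exp (\<eta> * G k) * (1 + \<eta> * g k + \<eta>\<^sup>2)"
      by (rule mult_left_mono) simp_all
    then show "exp (\<eta> * (G k + g k)) \<le> exp (\<eta> * G k) * (1 + \<eta> * g k + \<eta>\<^sup>2)"
      by (metis distrib_left exp_add)
  qed
  also have "\<dots> = Z + \<eta> * (\<Sum>k\<in>A. exp (\<eta> * G k) * g k) + \<eta>\<^sup>2 * Z"
    by (simp add: Z_def algebra_simps sum.distrib sum_distrib_left)
  also have "\<dots> = Z * (1 + (\<eta> * (\<Sum>k\<in>A. exp_weights \<eta> A G k * g k) + \<eta>\<^sup>2))"
  proof (cases "A = {}")
    case False
    then have "Z \<noteq> 0" using \<open>finite A\<close> unfolding Z_def by (metis exp_gt_zero sum_pos less_irrefl)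
    moreover have "(\<Sum>k\<in>A. exp_weights \<eta> A G k * g k) = (\<Sum>k\<in>A. exp (\<eta> * G k) * g k) / Z"
      by (simp add: weights sum_divide_distrib)
    ultimately show ?thesis by (simp add: field_simps)
  qed (simp add: Z_def)
  also have "\<dots> \<le> Z * exp (\<eta> * (\<Sum>k\<in>A. exp_weights \<eta> A G k * g k) + \<eta>\<^sup>2)"
    by (intro mult_left_mono) (auto simp: Z_def sum_nonneg)
  finally show ?thesis by (simp add: Z_def)
qed

lemma hedge_regret:
  fixes g :: "nat \<Rightarrow> 'a \<Rightarrow> real"
  assumes A: "finite A" "k0 \<in> A" and \<eta>: "0 < \<eta>" "\<eta> \<le> 1"
    and g: "\<And>t k. t \<in> {a..<b} \<Longrightarrow> k \<in> A \<Longrightarrow> \<bar>g t k\<bar> \<le> 1"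
  shows "(\<Sum>t=a..<b. g t k0)
      - (\<Sum>t=a..<b. \<Sum>k\<in>A. exp_weights \<eta> A (\<lambda>k. \<Sum>s=a..<t. g s k) k * g t k)
    \<le> ln (card A) / \<eta> + \<eta> * real (b - a)"
proof -
  define G where "G = (\<lambda>t k. \<Sum>s=a..<t. g s k)"
  define P where "P t = (\<Sum>k\<in>A. exp_weights \<eta> A (G t) k * g t k)" for t
  have potential:
    "(\<Sum>k\<in>A. exp (\<eta> * G t k)) \<le> card A * exp (\<eta> * (\<Sum>s=a..<t. P s) + \<eta>\<^sup>2 * real (t - a))"
    if "t \<le> b" for t
    using that
  proof (induction t)
    case 0
    then show ?case by (simp add: G_def)
  next
    case (Suc t)
    show ?case
    proof (cases "a \<le> t")
      case False
      then show ?thesis by (simp add: G_def)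
    next
      case True
      have "G (Suc t) k = G t k + g t k" for k
        using True by (simp add: G_def)
      then have "(\<Sum>k\<in>A. exp (\<eta> * G (Suc t) k))
          \<le> (\<Sum>k\<in>A. exp (\<eta> * G t k)) * exp (\<eta> * P t + \<eta>\<^sup>2)"
        unfolding P_def using True Suc.prems A \<eta> by (auto intro!: exp_potential_step g)
      also have "\<dots> \<le> card A * exp (\<eta> * (\<Sum>s=a..<t. P s) + \<eta>\<^sup>2 * real (t - a)) * exp (\<eta> * P t + \<eta>\<^sup>2)"
        using Suc by (intro mult_right_mono) auto
      also have "\<dots> = card A * exp (\<eta> * (\<Sum>s=a..<Suc t. P s) + \<eta>\<^sup>2 * real (Suc t - a))"
        using True by (simp add: Suc_diff_le mult.assoc algebra_simps flip: exp_add)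
      finally show ?thesis .
    qed
  qed
  have "exp (\<eta> * G b k0) \<le> card A * exp (\<eta> * (\<Sum>t=a..<b. P t) + \<eta>\<^sup>2 * real (b - a))"
    using member_le_sum[of k0 A "\<lambda>k. exp (\<eta> * G b k)"] potential[of b] A by simp
  moreover have "0 < card A" using A card_gt_0_iff by blast
  ultimately have "\<eta> * G b k0 \<le> ln (card A) + \<eta> * (\<Sum>t=a..<b. P t) + \<eta>\<^sup>2 * real (b - a)"
    by (simp add: ln_mult flip: ln_le_cancel_iff)
  then have "\<eta> * (G b k0 - (\<Sum>t=a..<b. P t)) \<le> \<eta> * (ln (card A) / \<eta> + \<eta> * real (b - a))"
    using \<eta> by (simp add: algebra_simps power2_eq_square)
  then show ?thesis
    using \<eta> by (simp add: G_def P_def mult_le_cancel_left_pos)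
qed

section \<open>Approximation by a single grid bid\<close>

lemma grid_bounds: "k \<le> K \<Longrightarrow> 0 \<le> grid K k \<and> grid K k \<le> 1"
  by (cases "K = 0") (auto simp: grid_def divide_le_eq_1)

lemma grid_round_up:
  assumes "1 \<le> K" "0 \<le> x" "x \<le> 1"
  obtains k where "k \<le> K" "x \<le> grid K k" "grid K k \<le> x + 1 / K"
proof
  define k where "k = nat \<lceil>K * x\<rceil>"
  have K: "0 < real K" using assms by simp
  have k: "real k = \<lceil>K * x\<rceil>" using assms by (simp add: k_def)
  show "k \<le> K" using assms by (simp add: k_def ceiling_le_iff nat_le_iff mult_left_le)
  show "x \<le> grid K k" using K by (simp add: grid_def k field_simps)
  show "grid K k \<le> x + 1 / K" using K by (simp add: grid_def k field_simps) linarith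
qed

lemma reward_le_max: "reward b v m \<le> max (v - m) 0"
  by (auto simp: reward_def)

lemma abs_reward_le_one:
  "b \<in> {0..1} \<Longrightarrow> v \<in> {0..1} \<Longrightarrow> m \<in> {0..1} \<Longrightarrow> \<bar>reward b v m\<bar> \<le> 1"
  by (auto simp: reward_def)

(* If some round of B is unprofitable, every round is within 2 W of unprofitable and bidding 0
   suffices; otherwise bid the first grid point above m a + W, which wins every round of B. *)
lemma grid_bid_regret:
  fixes v m :: "nat \<Rightarrow> real"
  assumes "1 \<le> K" and vals: "\<And>t. t \<in> B \<Longrightarrow> v t \<in> {0..1} \<and> m t \<in> {0..1}"
    and osc: "\<And>s t. s \<in> B \<Longrightarrow> t \<in> B \<Longrightarrow> \<bar>m t - m s\<bar> \<le> W \<and> \<bar>v t - v s\<bar> \<le> W"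
  obtains k where "k \<le> K"
    "\<And>t. t \<in> B \<Longrightarrow> max (v t - m t) 0 - reward (grid K k) (v t) (m t) \<le> 2 * W + 1 / K"
proof (cases "\<exists>s\<in>B. v s < m s")
  case True
  then obtain s where s: "s \<in> B" "v s < m s" by blast
  have "0 \<le> W" using osc[OF s(1) s(1)] by simp
  show ?thesis
  proof (rule that[of 0])
    fix t assume t: "t \<in> B"
    have "max (v t - m t) 0 \<le> 2 * W" using osc[OF s(1) t] s(2) \<open>0 \<le> W\<close> by linarith
    moreover have "0 \<le> reward (grid K 0) (v t) (m t)" using vals[OF t] by (simp add: reward_def grid_def)
    moreover have "0 \<le> 1 / real K" by simp
    ultimately show "max (v t - m t) 0 - reward (grid K 0) (v t) (m t) \<le> 2 * W + 1 / K"
      by linarith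
  qed simp
next
  case False
  show ?thesis
  proof (cases "B = {}")
    case True
    then show ?thesis by (intro that[of 0]) auto
  next
    case False
    then obtain a where a: "a \<in> B" by blast
    have "0 \<le> min 1 (m a + W)" using vals[OF a] osc[OF a a] by simp
    then obtain k where k: "k \<le> K" "min 1 (m a + W) \<le> grid K k"
      "grid K k \<le> min 1 (m a + W) + 1 / K"
      using grid_round_up[OF \<open>1 \<le> K\<close> _ min.cobounded1] by blast
    show ?thesis
    proof (rule that[OF k(1)])
      fix t assume t: "t \<in> B"
      have "m t \<le> grid K k" using k(2) vals[OF t] osc[OF a t] by (auto simp: abs_le_iff)
      then show "max (v t - m t) 0 - reward (grid K k) (v t) (m t) \<le> 2 * W + 1 / K"
        using k(3) osc[OF t a] \<open>\<not> (\<exists>s\<in>B. v s < m s)\<close> t by (auto simp: reward_def)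
    qed
  qed
qed

section \<open>Batches\<close>

lemma abs_diff_le_sum_increments:
  fixes f :: "nat \<Rightarrow> real"
  assumes "s \<le> t" "{s<..t} \<subseteq> S" "finite S"
  shows "\<bar>f t - f s\<bar> \<le> (\<Sum>u\<in>S. \<bar>f u - f (u - 1)\<bar>)"
proof -
  have "\<bar>f t - f s\<bar> = \<bar>\<Sum>i=s..<t. f (Suc i) - f i\<bar>"
    using assms by (simp add: sum_Suc_diff')
  also have "\<dots> \<le> (\<Sum>i=s..<t. \<bar>f (Suc i) - f i\<bar>)"
    by (rule sum_abs)
  also have "\<dots> = (\<Sum>u\<in>{s<..t}. \<bar>f u - f (u - 1)\<bar>)"
  proof -
    have "{s<..t} = {Suc s..<Suc t}" by auto
    then show ?thesis by (simp only: sum.shift_bounds_Suc_ivl) simp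
  qed
  also have "\<dots> \<le> (\<Sum>u\<in>S. \<bar>f u - f (u - 1)\<bar>)"
    using assms by (intro sum_mono2) auto
  finally show ?thesis .
qed

definition batch :: "nat \<Rightarrow> nat \<Rightarrow> nat \<Rightarrow> nat set" where
  "batch D T j = {t \<in> {1..T}. (t - 1) div D = j}"

lemma batch_eq_interval:
  assumes "1 \<le> D"
  shows "batch D T j = {j * D + 1..<min (j * D + D) T + 1}"
proof (intro set_eqI iffI)
  fix t assume "t \<in> batch D T j"
  then have t: "1 \<le> t" "t \<le> T" and j: "j = (t - 1) div D" by (auto simp: batch_def)
  have "j * D \<le> t - 1" "t - 1 < D + j * D"
    unfolding j using assms by (simp_all add: dividend_less_div_times)
  then show "t \<in> {j * D + 1..<min (j * D + D) T + 1}" using t by auto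
next
  fix t assume "t \<in> {j * D + 1..<min (j * D + D) T + 1}"
  then have "t \<in> {1..T}" "j * D \<le> t - 1" "t - 1 < Suc j * D" by auto
  then show "t \<in> batch D T j" by (simp add: batch_def div_nat_eqI mult.commute)
qed

lemma card_batch_le: "1 \<le> D \<Longrightarrow> card (batch D T j) \<le> D"
  by (simp add: batch_eq_interval)

lemma batch_start_eq: "t \<in> batch D T j \<Longrightarrow> batch_start D t = j * D + 1"
  by (simp add: batch_def batch_start_def)

lemma sum_over_batches:
  assumes "S \<subseteq> {1..T}"
  shows "(\<Sum>j\<le>T div D. \<Sum>t\<in>batch D T j \<inter> S. f t) = sum f S"
proof -
  have "(\<lambda>t. (t - 1) div D) ` S \<subseteq> {..T div D}"
    using assms by (fastforce intro!: div_le_mono)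
  then have "(\<Sum>j\<le>T div D. \<Sum>t | t \<in> S \<and> (t - 1) div D = j. f t) = sum f S"
    using assms by (intro sum.group) (auto intro: finite_subset)
  moreover have "batch D T j \<inter> S = {t. t \<in> S \<and> (t - 1) div D = j}" for j
    using assms by (auto simp: batch_def)
  ultimately show ?thesis by simp
qed

lemma sum_over_all_batches: "(\<Sum>j\<le>T div D. \<Sum>t\<in>batch D T j. f t) = sum f {1..T}"
proof -
  have "batch D T j \<inter> {1..T} = batch D T j" for j
    by (auto simp: batch_def)
  then show ?thesis
    using sum_over_batches[where S="{1..T}" and T=T and D=D and f=f] by simp
qed

lemma increments_in_batch:
  assumes "s \<in> batch D T j" "t \<in> batch D T j"
  shows "{s<..t} \<subseteq> batch D T j \<inter> {2..T}"
proof
  fix u assume u: "u \<in> {s<..t}"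
  then have "(s - 1) div D \<le> (u - 1) div D" "(u - 1) div D \<le> (t - 1) div D"
    by (auto intro!: div_le_mono)
  then show "u \<in> batch D T j \<inter> {2..T}" using assms u by (auto simp: batch_def)
qed

(* The increment into the first round of a batch is counted in that batch, so the batch
   variations add up to the total variation. *)
definition batch_variation :: "nat \<Rightarrow> nat \<Rightarrow> (nat \<Rightarrow> real) \<Rightarrow> nat \<Rightarrow> real" where
  "batch_variation D T f j = (\<Sum>u\<in>batch D T j \<inter> {2..T}. \<bar>f u - f (u - 1)\<bar>)"

lemma batch_variation_nonneg: "0 \<le> batch_variation D T f j"
  by (simp add: batch_variation_def sum_nonneg)

lemma sum_batch_variation: "(\<Sum>j\<le>T div D. batch_variation D T f j) = variation f T"
  by (simp add: batch_variation_def variation_def sum_over_batches)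

lemma abs_diff_le_batch_variation:
  assumes "s \<in> batch D T j" "t \<in> batch D T j"
  shows "\<bar>f t - f s\<bar> \<le> batch_variation D T f j"
proof (cases "s \<le> t")
  case True
  then show ?thesis
    unfolding batch_variation_def using increments_in_batch[OF assms]
    by (intro abs_diff_le_sum_increments) (auto simp: batch_def)
next
  case False
  then have "\<bar>f s - f t\<bar> \<le> batch_variation D T f j"
    unfolding batch_variation_def using increments_in_batch[OF assms(2,1)]
    by (intro abs_diff_le_sum_increments) (auto simp: batch_def)
  then show ?thesis by (simp add: abs_minus_commute)
qed

section \<open>Regret of the restarted Hedge policy\<close>

lemma hedge_prob_eq_exp_weights:
  "hedge_prob K \<eta> D v m t = exp_weights \<eta> {0..K} (cum_reward K D v m t)"
  by (simp add: hedge_prob_def exp_weights_def fun_eq_iff)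

lemma exp_reward_le_max: "exp_reward K \<eta> D v m t \<le> max (v t - m t) 0"
proof -
  have "exp_reward K \<eta> D v m t \<le> (\<Sum>k=0..K. hedge_prob K \<eta> D v m t k * max (v t - m t) 0)"
    unfolding exp_reward_def hedge_prob_eq_exp_weights
    by (intro sum_mono mult_left_mono reward_le_max exp_weights_nonneg)
  also have "\<dots> = max (v t - m t) 0"
    by (simp add: hedge_prob_eq_exp_weights sum_exp_weights flip: sum_distrib_right)
  finally show ?thesis .
qed

lemma dyn_regret_nonneg: "0 \<le> dyn_regret K \<eta> D T v m"
  unfolding dyn_regret_def by (simp add: sum_mono exp_reward_le_max)

lemma batch_regret:
  fixes v m :: "nat \<Rightarrow> real" and \<eta> :: real
  assumes "1 \<le> K" "1 \<le> D" "0 < \<eta>" "\<eta> \<le> 1"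
    and vals: "\<And>t. t \<in> batch D T j \<Longrightarrow> v t \<in> {0..1} \<and> m t \<in> {0..1}"
    and osc: "\<And>s t. s \<in> batch D T j \<Longrightarrow> t \<in> batch D T j
      \<Longrightarrow> \<bar>m t - m s\<bar> \<le> W \<and> \<bar>v t - v s\<bar> \<le> W"
  shows "(\<Sum>t\<in>batch D T j. max (v t - m t) 0 - exp_reward K \<eta> D v m t)
    \<le> card (batch D T j) * (2 * W + 1 / K) + ln (real K + 1) / \<eta> + \<eta> * card (batch D T j)"
proof -
  define a where "a = j * D + 1"
  define b where "b = min (j * D + D) T + 1"
  define g where "g t k = reward (grid K k) (v t) (m t)" for t k
  have batch: "batch D T j = {a..<b}"
    unfolding a_def b_def using \<open>1 \<le> D\<close> by (rule batch_eq_interval)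
  obtain k where "k \<le> K"
    and k: "\<And>t. t \<in> batch D T j
      \<Longrightarrow> max (v t - m t) 0 - reward (grid K k) (v t) (m t) \<le> 2 * W + 1 / K"
    using grid_bid_regret[of K "batch D T j" v m W] assms by blast
  have "(\<Sum>t=a..<b. exp_reward K \<eta> D v m t)
      = (\<Sum>t=a..<b. \<Sum>k\<in>{0..K}. exp_weights \<eta> {0..K} (\<lambda>k. \<Sum>s=a..<t. g s k) k * g t k)"
    using batch_start_eq[of _ D T j] batch
    by (intro sum.cong) (simp_all add: exp_reward_def hedge_prob_eq_exp_weights cum_reward_def[abs_def] g_def a_def)
  moreover have "(\<Sum>t=a..<b. g t k)
      - (\<Sum>t=a..<b. \<Sum>k\<in>{0..K}. exp_weights \<eta> {0..K} (\<lambda>k. \<Sum>s=a..<t. g s k) k * g t k)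
      \<le> ln (card {0..K}) / \<eta> + \<eta> * real (b - a)"
    using \<open>k \<le> K\<close> assms batch
    by (intro hedge_regret) (auto simp: g_def intro!: abs_reward_le_one grid_bounds)
  moreover have "(\<Sum>t=a..<b. max (v t - m t) 0 - g t k) \<le> (\<Sum>t=a..<b. 2 * W + 1 / K)"
    using k batch by (intro sum_mono) (simp add: g_def)
  ultimately show ?thesis
    by (simp add: batch sum_subtractf algebra_simps)
qed

lemma batch_regret_le_variation:
  fixes v m :: "nat \<Rightarrow> real" and j :: nat
  assumes "1 \<le> K" "1 \<le> D" and vals: "\<And>t. t \<in> {1..T} \<Longrightarrow> v t \<in> {0..1} \<and> m t \<in> {0..1}"
  defines "W \<equiv> batch_variation D T m j + batch_variation D T v j"
  shows "(\<Sum>t\<in>batch D T j. max (v t - m t) 0 - exp_reward K (1 / sqrt D) D v m t)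
    \<le> 2 * real D * W + card (batch D T j) / K + sqrt D * (ln (real K + 1) + 1)"
proof -
  have "0 < 1 / sqrt D" "1 / sqrt D \<le> 1" using \<open>1 \<le> D\<close> by auto
  moreover have "\<bar>m t - m s\<bar> \<le> W \<and> \<bar>v t - v s\<bar> \<le> W"
    if "s \<in> batch D T j" "t \<in> batch D T j" for s t
    using abs_diff_le_batch_variation[OF that, of m] abs_diff_le_batch_variation[OF that, of v]
      batch_variation_nonneg[of D T m j] batch_variation_nonneg[of D T v j]
    by (simp add: W_def)
  ultimately have "(\<Sum>t\<in>batch D T j. max (v t - m t) 0 - exp_reward K (1 / sqrt D) D v m t)
      \<le> card (batch D T j) * (2 * W + 1 / K) + ln (real K + 1) / (1 / sqrt D)
        + 1 / sqrt D * card (batch D T j)"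
    using assms by (intro batch_regret) (auto simp: batch_def)
  also have "\<dots> \<le> D * (2 * W) + card (batch D T j) / K + sqrt D * (ln (real K + 1) + 1)"
  proof -
    have "card (batch D T j) * (2 * W) \<le> D * (2 * W)"
      using card_batch_le[OF \<open>1 \<le> D\<close>] batch_variation_nonneg[of D T]
      by (intro mult_right_mono) (auto simp: W_def)
    moreover have "1 / sqrt D * card (batch D T j) \<le> sqrt D"
      using card_batch_le[OF \<open>1 \<le> D\<close>, of T j] \<open>1 \<le> D\<close>
      by (simp add: divide_le_eq real_le_rsqrt)
    ultimately show ?thesis by (simp add: algebra_simps)
  qed
  finally show ?thesis by simp
qed

lemma batched_hedge_regret:
  fixes v m :: "nat \<Rightarrow> real"
  assumes "1 \<le> K" "1 \<le> D" and vals: "\<And>t. t \<in> {1..T} \<Longrightarrow> v t \<in> {0..1} \<and> m t \<in> {0..1}"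
  shows "dyn_regret K (1 / sqrt D) D T v m
    \<le> 2 * real D * (variation m T + variation v T) + T / K
      + (T / D + 1) * sqrt D * (ln (real K + 1) + 1)"
proof -
  define W where "W j = batch_variation D T m j + batch_variation D T v j" for j
  define regret where "regret t = max (v t - m t) 0 - exp_reward K (1 / sqrt D) D v m t" for t
  have "dyn_regret K (1 / sqrt D) D T v m = (\<Sum>j\<le>T div D. \<Sum>t\<in>batch D T j. regret t)"
    by (simp add: sum_over_all_batches dyn_regret_def regret_def sum_subtractf)
  also have "\<dots> \<le> (\<Sum>j\<le>T div D. 2 * real D * W j + card (batch D T j) / K + sqrt D * (ln (real K + 1) + 1))"
    unfolding regret_def W_def using assms by (intro sum_mono batch_regret_le_variation)
  also have "\<dots> = 2 * real D * (\<Sum>j\<le>T div D. W j) + (\<Sum>j\<le>T div D. card (batch D T j)) / K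
      + (T div D + 1) * (sqrt D * (ln (real K + 1) + 1))"
    by (simp add: sum.distrib sum_distrib_left sum_divide_distrib)
  also have "(\<Sum>j\<le>T div D. W j) = variation m T + variation v T"
    by (simp add: W_def sum.distrib sum_batch_variation)
  also have "(\<Sum>j\<le>T div D. card (batch D T j)) = T"
    using sum_over_all_batches[where T=T and D=D and f="\<lambda>_. 1::nat"] by simp
  also have "real (T div D + 1) * (sqrt D * (ln (real K + 1) + 1))
      \<le> (T / D + 1) * (sqrt D * (ln (real K + 1) + 1))"
    using \<open>1 \<le> K\<close> by (intro mult_right_mono) (auto simp: of_nat_div_le_of_nat)
  finally show ?thesis by (simp add: mult.assoc)
qed

section \<open>Choice of the batch length\<close>

lemma powr_two_thirds_identities:
  fixes T W :: real
  assumes "0 < T" "0 < W"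
  shows "(T / W) powr (2/3) * W = T powr (2/3) * W powr (1/3)"
    and "T / sqrt ((T / W) powr (2/3)) = T powr (2/3) * W powr (1/3)"
proof -
  have "W = W powr (2/3) * W powr (1/3)" using assms by (simp flip: powr_add)
  then show "(T / W) powr (2/3) * W = T powr (2/3) * W powr (1/3)"
    using assms by (simp add: powr_divide field_simps)
  have "sqrt ((T / W) powr (2/3)) = T powr (1/3) / W powr (1/3)"
    using assms by (simp add: powr_powr powr_divide flip: powr_half_sqrt)
  moreover have "T powr (1/3) * T powr (2/3) = T" using assms by (simp flip: powr_add)
  ultimately show "T / sqrt ((T / W) powr (2/3)) = T powr (2/3) * W powr (1/3)"
    using assms by (smt (verit) divide_divide_eq_right nonzero_mult_div_cancel_left zero_less_mult_iff)
qed

lemma sqrt_powr_two_thirds_le: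
  fixes T W :: real
  assumes "1 \<le> T" "1 \<le> W"
  shows "sqrt ((T / W) powr (2/3)) \<le> T powr (2/3) * W powr (1/3)"
proof -
  have "sqrt ((T / W) powr (2/3)) = T powr (1/3) / W powr (1/3)"
    using assms by (simp add: powr_powr powr_divide flip: powr_half_sqrt)
  also have "\<dots> \<le> T powr (1/3)" using assms by (simp add: divide_le_eq ge_one_powr_ge_zero)
  also have "\<dots> \<le> T powr (2/3)" using assms by (intro powr_mono) auto
  also have "\<dots> \<le> T powr (2/3) * W powr (1/3)"
    using assms by (simp add: mult_le_cancel_left1 ge_one_powr_ge_zero)
  finally show ?thesis .
qed

lemma ln_bounds_ge_three:
  fixes T :: real
  assumes "3 \<le> T"
  shows "1 \<le> ln T" and "ln (T + 1) + 1 \<le> 3 * ln T"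
proof -
  show "1 \<le> ln T"
    using exp_le assms by (subst ln_ge_iff) auto
  have "3 * T \<le> T * T" using assms by (intro mult_right_mono) auto
  then have "T + 1 \<le> T\<^sup>2" using assms unfolding power2_eq_square by linarith
  then have "ln (T + 1) \<le> 2 * ln T"
    using assms by (simp add: ln_realpow flip: ln_le_cancel_iff)
  with \<open>1 \<le> ln T\<close> show "ln (T + 1) + 1 \<le> 3 * ln T" by linarith
qed

lemma batch_length_tradeoff:
  fixes T W D c1 c2 :: real
  assumes T: "1 \<le> T" and W: "1 \<le> W" and c: "0 < c1" "0 < c2"
    and D: "c1 * (T / W) powr (2/3) \<le> D" "D \<le> c2 * (T / W) powr (2/3)"
  shows "D * W \<le> c2 * (T powr (2/3) * W powr (1/3))"
    and "(T / D + 1) * sqrt D \<le> (1 / sqrt c1 + sqrt c2) * (T powr (2/3) * W powr (1/3))"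
proof -
  let ?g = "(T / W) powr (2/3)" and ?P = "T powr (2/3) * W powr (1/3)"
  have "0 < c1 * ?g" using T W c by simp
  then have "0 < D" using D(1) by linarith
  have "D * W \<le> c2 * ?g * W" using D W by simp
  also have "\<dots> = c2 * ?P" using T W by (simp add: powr_two_thirds_identities)
  finally show "D * W \<le> c2 * ?P" .
  have "sqrt c1 * sqrt ?g \<le> sqrt D" using D by (simp flip: real_sqrt_mult)
  then have "T / sqrt D \<le> T / (sqrt c1 * sqrt ?g)"
    using T W c \<open>0 < D\<close> by (intro divide_left_mono) auto
  also have "\<dots> = ?P / sqrt c1"
    using T W by (simp add: powr_two_thirds_identities flip: divide_divide_eq_left')
  finally have "T / sqrt D \<le> ?P / sqrt c1" .
  moreover have "sqrt D \<le> sqrt c2 * sqrt ?g" using D by (simp flip: real_sqrt_mult)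
  moreover have "sqrt c2 * sqrt ?g \<le> sqrt c2 * ?P"
    using T W c by (simp add: sqrt_powr_two_thirds_le)
  moreover have "(T / D + 1) * sqrt D = T / sqrt D + sqrt D"
    using \<open>0 < D\<close> by (simp add: field_simps)
  ultimately show "(T / D + 1) * sqrt D \<le> (1 / sqrt c1 + sqrt c2) * ?P"
    by (simp add: algebra_simps)
qed

lemma batched_regret_bound_le_rate:
  fixes T W D c1 c2 :: real
  assumes T: "3 \<le> T" and W: "1 \<le> W" and c: "0 < c1" "0 < c2"
    and D: "c1 * (T / W) powr (2/3) \<le> D" "D \<le> c2 * (T / W) powr (2/3)"
  shows "2 * D * W + 1 + (T / D + 1) * sqrt D * (ln (T + 1) + 1)
    \<le> (2 * c2 + 1 + 3 * (1 / sqrt c1 + sqrt c2)) * (T powr (2/3) * W powr (1/3) * ln T)"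
proof -
  let ?P = "T powr (2/3) * W powr (1/3)"
  have P: "1 \<le> ?P"
    using mult_mono[of 1 "T powr (2/3)" 1 "W powr (1/3)"] T W by (simp add: ge_one_powr_ge_zero)
  have lnT: "1 \<le> ln T" "ln (T + 1) + 1 \<le> 3 * ln T"
    using ln_bounds_ge_three[OF T] by auto
  have DW: "D * W \<le> c2 * ?P" and tradeoff: "(T / D + 1) * sqrt D \<le> (1 / sqrt c1 + sqrt c2) * ?P"
    using batch_length_tradeoff[OF _ W c D] T by auto
  from tradeoff have "(T / D + 1) * sqrt D * (ln (T + 1) + 1) \<le> (1 / sqrt c1 + sqrt c2) * ?P * (3 * ln T)"
  proof (rule mult_mono)
    show "0 \<le> (1 / sqrt c1 + sqrt c2) * ?P" using c P by simp
    show "0 \<le> ln (T + 1) + 1" using T by simp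
  qed (use lnT in auto)
  also have "\<dots> = 3 * (1 / sqrt c1 + sqrt c2) * (?P * ln T)"
    by (simp add: mult_ac)
  finally have "(T / D + 1) * sqrt D * (ln (T + 1) + 1) \<le> 3 * (1 / sqrt c1 + sqrt c2) * (?P * ln T)" .
  moreover have "2 * D * W + 1 \<le> (2 * c2 + 1) * (?P * ln T)"
  proof -
    have "?P \<le> ?P * ln T" using P lnT by (simp add: mult_le_cancel_left1)
    moreover from this have "c2 * ?P \<le> c2 * (?P * ln T)" using c by simp
    moreover have "(2 * c2 + 1) * (?P * ln T) = 2 * (c2 * (?P * ln T)) + ?P * ln T"
      by (simp add: algebra_simps)
    moreover have "2 * D * W = 2 * (D * W)" by simp
    ultimately show ?thesis using DW P by linarith
  qed
  ultimately have "2 * D * W + 1 + (T / D + 1) * sqrt D * (ln (T + 1) + 1)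
      \<le> (2 * c2 + 1) * (?P * ln T) + 3 * (1 / sqrt c1 + sqrt c2) * (?P * ln T)"
    by linarith
  then show ?thesis by (simp only: distrib_right)
qed

lemma batched_hedge_dyn_regret_le_rate:
  fixes v m :: "nat \<Rightarrow> real" and W c1 c2 :: real
  assumes T: "3 \<le> T" and W: "1 \<le> W" and c: "0 < c1" "0 < c2"
    and D: "c1 * (T / W) powr (2/3) \<le> D" "D \<le> c2 * (T / W) powr (2/3)"
    and var: "variation m T + variation v T \<le> W"
    and vals: "\<And>t. t \<in> {1..T} \<Longrightarrow> v t \<in> {0..1} \<and> m t \<in> {0..1}"
  shows "dyn_regret T (1 / sqrt D) D T v m
    \<le> (2 * c2 + 1 + 3 * (1 / sqrt c1 + sqrt c2)) * (T powr (2/3) * W powr (1/3) * ln T)"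
proof -
  have "0 < c1 * (T / W) powr (2/3)" using T W c by simp
  then have "1 \<le> D" using D by linarith
  then have "dyn_regret T (1 / sqrt D) D T v m
      \<le> 2 * real D * (variation m T + variation v T) + T / T
        + (T / D + 1) * sqrt D * (ln (real T + 1) + 1)"
    using T vals by (intro batched_hedge_regret) auto
  also have "\<dots> \<le> 2 * real D * W + 1 + (T / D + 1) * sqrt D * (ln (real T + 1) + 1)"
    using T var by (simp add: mult_left_mono)
  also have "\<dots> \<le> (2 * c2 + 1 + 3 * (1 / sqrt c1 + sqrt c2)) * (T powr (2/3) * W powr (1/3) * ln T)"
    using T W c D by (intro batched_regret_bound_le_rate) auto
  finally show ?thesis .
qed

lemma batched_hedge_dyn_regret_bigo:
  fixes V :: "nat \<Rightarrow> real" and v m :: "nat \<Rightarrow> nat \<Rightarrow> real" and D :: "nat \<Rightarrow> nat"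
  assumes vals: "\<forall>T t. 1 \<le> t \<and> t \<le> T \<longrightarrow> v T t \<in> {0..1} \<and> m T t \<in> {0..1}"
    and varm: "\<forall>T. variation (m T) T \<le> V T"
    and W: "eventually (\<lambda>T. 1 \<le> V T + variation (v T) T) at_top"
    and D: "(\<lambda>T. real (D T)) \<in> \<Theta>(\<lambda>T. (real T / (V T + variation (v T) T)) powr (2/3))"
  shows "(\<lambda>T. dyn_regret T (1 / sqrt (D T)) (D T) T (v T) (m T))
    \<in> O(\<lambda>T. real T powr (2/3) * (V T + variation (v T) T) powr (1/3) * ln (real T))"
proof -
  obtain c2 where "0 < c2" and up: "eventually (\<lambda>T. norm (real (D T))
      \<le> c2 * norm ((real T / (V T + variation (v T) T)) powr (2/3))) at_top"
    using landau_o.bigE[OF bigthetaD1[OF D]] by blast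
  obtain c1 where "0 < c1" and lo: "eventually (\<lambda>T. norm (real (D T))
      \<ge> c1 * norm ((real T / (V T + variation (v T) T)) powr (2/3))) at_top"
    using landau_omega.bigE[OF bigthetaD2[OF D]] by blast
  define C where "C = 2 * c2 + 1 + 3 * (1 / sqrt c1 + sqrt c2)"
  have "0 < C" using \<open>0 < c1\<close> \<open>0 < c2\<close> by (simp add: C_def add_pos_nonneg)
  then show ?thesis
  proof (rule landau_o.bigI)
    show "eventually (\<lambda>T. norm (dyn_regret T (1 / sqrt (D T)) (D T) T (v T) (m T))
        \<le> C * norm (real T powr (2/3) * (V T + variation (v T) T) powr (1/3) * ln (real T))) at_top"
      using up lo W eventually_ge_at_top[of 3]
    proof eventually_elim
      case (elim T)
      then have "dyn_regret T (1 / sqrt (D T)) (D T) T (v T) (m T)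
          \<le> C * (real T powr (2/3) * (V T + variation (v T) T) powr (1/3) * ln (real T))"
        unfolding C_def using \<open>0 < c1\<close> \<open>0 < c2\<close> vals varm[rule_format, of T]
        by (intro batched_hedge_dyn_regret_le_rate) auto
      then show ?case using dyn_regret_nonneg elim by simp
    qed
  qed
qed

theorem proposition3:
  shows "\<exists>(K :: nat \<Rightarrow> nat \<Rightarrow> nat) (eta :: nat \<Rightarrow> nat \<Rightarrow> real) (c :: real).
    \<forall>(V :: nat \<Rightarrow> real) (v :: nat \<Rightarrow> nat \<Rightarrow> real) (m :: nat \<Rightarrow> nat \<Rightarrow> real) (D :: nat \<Rightarrow> nat).
      (\<forall>T t. 1 \<le> t \<and> t \<le> T \<longrightarrow> v T t \<in> {0..1} \<and> m T t \<in> {0..1}) \<and>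
      (\<forall>T. variation (m T) T \<le> V T) \<and>
      V \<in> o(\<lambda>T. real T) \<and>
      (\<lambda>T. variation (v T) T) \<in> o(\<lambda>T. real T) \<and>
      eventually (\<lambda>T. 1 \<le> V T + variation (v T) T) at_top \<and>
      (\<lambda>T. real (D T)) \<in> \<Theta>(\<lambda>T. (real T / (V T + variation (v T) T)) powr (2/3))
      \<longrightarrow>
      (\<lambda>T. dyn_regret (K T (D T)) (eta T (D T)) (D T) T (v T) (m T))
        \<in> O(\<lambda>T. real T powr (2/3) * (V T + variation (v T) T) powr (1/3) * ln (real T) powr c)"
proof (intro exI[of _ "\<lambda>T D. T"] exI[of _ "\<lambda>T D. 1 / sqrt (real D)"] exI[of _ "1::real"] allI impI)
  fix V :: "nat \<Rightarrow> real" and v m :: "nat \<Rightarrow> nat \<Rightarrow> real" and D :: "nat \<Rightarrow> nat"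
  assume "(\<forall>T t. 1 \<le> t \<and> t \<le> T \<longrightarrow> v T t \<in> {0..1} \<and> m T t \<in> {0..1}) \<and>
      (\<forall>T. variation (m T) T \<le> V T) \<and>
      V \<in> o(\<lambda>T. real T) \<and>
      (\<lambda>T. variation (v T) T) \<in> o(\<lambda>T. real T) \<and>
      eventually (\<lambda>T. 1 \<le> V T + variation (v T) T) at_top \<and>
      (\<lambda>T. real (D T)) \<in> \<Theta>(\<lambda>T. (real T / (V T + variation (v T) T)) powr (2/3))"
  \<comment> \<open>The o(T) hypotheses only make the rate sublinear; the bound itself does not need them.\<close>
  then have "(\<lambda>T. dyn_regret T (1 / sqrt (D T)) (D T) T (v T) (m T))
      \<in> O(\<lambda>T. real T powr (2/3) * (V T + variation (v T) T) powr (1/3) * ln (real T))"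
    by (intro batched_hedge_dyn_regret_bigo) auto
  moreover have "O(\<lambda>T. real T powr (2/3) * (V T + variation (v T) T) powr (1/3) * ln (real T) powr 1)
      = O(\<lambda>T. real T powr (2/3) * (V T + variation (v T) T) powr (1/3) * ln (real T))"
    by (intro landau_o.big.cong eventually_mono[OF eventually_ge_at_top[of 1]]) simp
  ultimately show "(\<lambda>T. dyn_regret T (1 / sqrt (D T)) (D T) T (v T) (m T))
      \<in> O(\<lambda>T. real T powr (2/3) * (V T + variation (v T) T) powr (1/3) * ln (real T) powr 1)"
    by simp
qed

end
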